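(* Let $d_1\leq d_2$ and let $X$ be a positive semidefinite matrix in $\mathcal{M}_{d_1}\otimes\mathcal{M}_{d_2}$, written as $X=\sum_{i,j=1}^{d_1}\ket{i}\bra{j}\otimes X_{ij}$ with blocks $X_{ij}\in\mathcal{M}_{d_2}$. If $\mathrm{SN}(X)=k\geq 2$, then there exist distinct indices $m_1,\ldots,m_{d_1-k+2}\in\{1,\ldots,d_1\}$ such that the principal sub-block matrix \[ Y=\sum_{s,t=1}^{d_1-k+2}\ket{s}\bra{t}\otimes X_{m_sm_t}\in\mathcal{M}_{d_1-k+2}\otimes\mathcal{M}_{d_2} \] (which is positive semidefinite) is entangled.
   Context: $\mathcal{M}_d$: complex $d\times d$ matrices. A positive semidefinite $W\in\mathcal{M}_{a}\otimes\mathcal{M}_{b}$ is separable if it is a finite sum $\sum_i P_i\otimes Q_i$ with $P_i,Q_i$ positive semidefinite, and entangled otherwise. The Schmidt rank of $\ket{\psi}\in\mathbb{C}^{a}\otimes\mathbb{C}^{b}$ is the rank of $\mathrm{tr}_A\ket{\psi}\bra{\psi}$; for a nonzero positive semidefinite $W$, $\mathrm{SN}(W)$ is the minimum over decompositions $W=\sum_ip_i\ket{\psi_i}\bra{\psi_i}$ ($p_i>0$) of the maximal Schmidt rank of the $\ket{\psi_i}$. *)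

theory Defs
  imports "Jordan_Normal_Form.DL_Rank"
begin

text \<open>The tensor
  product basis vector |i> (x) |p> of C^a (x) C^b (0-based indices) is identified
  with the basis vector with index i * b + p of C^(a*b).\<close>

definition psd :: "nat \<Rightarrow> complex mat \<Rightarrow> bool" where
  "psd n A \<longleftrightarrow> A \<in> carrier_mat n n \<and>
     (\<forall>v \<in> carrier_vec n.
        let z = (\<Sum>i<n. \<Sum>j<n. cnj (v $ i) * A $$ (i, j) * v $ j) in Im z = 0 \<and> Re z \<ge> 0)"

definition kron :: "complex mat \<Rightarrow> complex mat \<Rightarrow> complex mat" where
  "kron A B = mat (dim_row A * dim_row B) (dim_col A * dim_col B)
     (\<lambda>(i, j). A $$ (i div dim_row B, j div dim_col B) * B $$ (i mod dim_row B, j mod dim_col B))"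

definition separable :: "nat \<Rightarrow> nat \<Rightarrow> complex mat \<Rightarrow> bool" where
  "separable a b W \<longleftrightarrow> psd (a * b) W \<and>
     (\<exists>ps :: (complex mat \<times> complex mat) list.
        (\<forall>(P, Q) \<in> set ps. psd a P \<and> psd b Q) \<and>
        W = foldr (\<lambda>(P, Q) acc. kron P Q + acc) ps (0\<^sub>m (a * b) (a * b)))"

definition entangled :: "nat \<Rightarrow> nat \<Rightarrow> complex mat \<Rightarrow> bool" where
  "entangled a b W \<longleftrightarrow> psd (a * b) W \<and> \<not> separable a b W"

definition outer :: "complex vec \<Rightarrow> complex mat" where
  "outer v = mat (dim_vec v) (dim_vec v) (\<lambda>(i, j). v $ i * cnj (v $ j))"

definition ptrace_A :: "nat \<Rightarrow> nat \<Rightarrow> complex mat \<Rightarrow> complex mat" where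
  "ptrace_A a b M = mat b b (\<lambda>(p, q). \<Sum>i<a. M $$ (i * b + p, i * b + q))"

definition schmidt_rank :: "nat \<Rightarrow> nat \<Rightarrow> complex vec \<Rightarrow> nat" where
  "schmidt_rank a b v = vec_space.rank b (ptrace_A a b (outer v))"

definition schmidt_number :: "nat \<Rightarrow> nat \<Rightarrow> complex mat \<Rightarrow> nat" where
  "schmidt_number a b W = (LEAST k. \<exists>ds :: (real \<times> complex vec) list.
      (\<forall>(p, v) \<in> set ds. p > 0 \<and> v \<in> carrier_vec (a * b) \<and> schmidt_rank a b v \<le> k) \<and>
      W = foldr (\<lambda>(p, v) acc. complex_of_real p \<cdot>\<^sub>m outer v + acc) ds (0\<^sub>m (a * b) (a * b)))"

definition principal_subblock :: "nat \<Rightarrow> nat \<Rightarrow> (nat \<Rightarrow> nat) \<Rightarrow> complex mat \<Rightarrow> complex mat" where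
  "principal_subblock n d2 m X = mat (n * d2) (n * d2)
     (\<lambda>(i, j). X $$ (m (i div d2) * d2 + i mod d2, m (j div d2) * d2 + j mod d2))"

end

theory Submission
  imports Defs
begin

(* If the principal sub-block Y formed by the first n = d1 - k + 2 blocks of X were separable,
   Y would be the Gram matrix sum_u u u^* of product vectors u of C^n (x) C^d2.  A Gram
   decomposition of a principal submatrix of a positive semidefinite matrix extends, one index at
   a time by a Cholesky step, to a Gram decomposition of the whole matrix whose vectors either
   extend the given ones or vanish on the given indices.  Extending the decomposition of Y to X in
   this way, every vector is a product vector on the first n blocks with arbitrary entries on the
   remaining d1 - n blocks, so its Schmidt rank is at most 1 + (d1 - n) = k - 1, contradicting
   SN(X) = k. *)

lemma sum_list_sum_swap: "(\<Sum>u\<leftarrow>us. \<Sum>j\<in>J. f u j) = (\<Sum>j\<in>J. \<Sum>u\<leftarrow>us. f u j)"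
  by (induction us) (simp_all add: sum.distrib)

lemma cnj_sum_list: "cnj (\<Sum>u\<leftarrow>us. f u) = (\<Sum>u\<leftarrow>us. cnj (f u))"
  by (induction us) simp_all

lemma sum_list_concat_map:
  "(\<Sum>u\<leftarrow>[g x y. x \<leftarrow> xs, y \<leftarrow> ys]. f u) = (\<Sum>x\<leftarrow>xs. \<Sum>y\<leftarrow>ys. f (g x y))"
  by (induction xs) (simp_all add: o_def)

section \<open>Positive semidefinite kernels on finite index sets\<close>

definition qform :: "nat set \<Rightarrow> (nat \<Rightarrow> nat \<Rightarrow> complex) \<Rightarrow> (nat \<Rightarrow> complex) \<Rightarrow> complex" where
  "qform I A v = (\<Sum>i\<in>I. \<Sum>j\<in>I. cnj (v i) * A i j * v j)"

definition psd_on :: "nat set \<Rightarrow> (nat \<Rightarrow> nat \<Rightarrow> complex) \<Rightarrow> bool" where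
  "psd_on I A \<longleftrightarrow> (\<forall>v. Im (qform I A v) = 0 \<and> 0 \<le> Re (qform I A v))"

lemma qform_cong:
  assumes "\<And>i. i \<in> I \<Longrightarrow> v i = w i" "\<And>i j. i \<in> I \<Longrightarrow> j \<in> I \<Longrightarrow> A i j = B i j"
  shows "qform I A v = qform I B w"
  unfolding qform_def using assms by (intro sum.cong) auto

lemma qform_eq_on_support:
  assumes "finite I" "J \<subseteq> I" "\<And>i. i \<notin> J \<Longrightarrow> v i = 0"
  shows "qform I A v = qform J A v"
proof -
  have "qform I A v = (\<Sum>i\<in>J. \<Sum>j\<in>I. cnj (v i) * A i j * v j)"
    unfolding qform_def by (rule sum.mono_neutral_right) (use assms in \<open>auto intro: finite_subset\<close>)
  also have "\<dots> = (\<Sum>i\<in>J. \<Sum>j\<in>J. cnj (v i) * A i j * v j)"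
    by (rule sum.cong[OF refl], rule sum.mono_neutral_right) (use assms in \<open>auto intro: finite_subset\<close>)
  finally show ?thesis unfolding qform_def .
qed

lemma qform_insert:
  assumes "finite J" "p \<notin> J"
  shows "qform (insert p J) A v = cnj (v p) * A p p * v p + cnj (v p) * (\<Sum>j\<in>J. A p j * v j)
    + (\<Sum>i\<in>J. cnj (v i) * A i p) * v p + qform J A v"
  using assms by (simp add: qform_def sum.distrib sum_distrib_left sum_distrib_right algebra_simps)

lemma psd_on_cong:
  assumes "\<And>i j. i \<in> I \<Longrightarrow> j \<in> I \<Longrightarrow> A i j = B i j"
  shows "psd_on I A \<longleftrightarrow> psd_on I B"
  unfolding psd_on_def using qform_cong[of I, OF refl assms] by simp

lemma psd_on_subset:
  assumes "finite I" "J \<subseteq> I" "psd_on I A"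
  shows "psd_on J A"
  unfolding psd_on_def
proof
  fix v :: "nat \<Rightarrow> complex"
  define w where "w i = (if i \<in> J then v i else 0)" for i
  have "qform I A w = qform J A w" by (rule qform_eq_on_support) (use assms in \<open>auto simp: w_def\<close>)
  also have "\<dots> = qform J A v" by (rule qform_cong) (auto simp: w_def)
  finally show "Im (qform J A v) = 0 \<and> 0 \<le> Re (qform J A v)" using assms(3) unfolding psd_on_def by metis
qed

lemma qform_two_points:
  assumes "finite I" "i \<in> I" "j \<in> I" "i \<noteq> j"
  shows "qform I A (\<lambda>x. if x = i then a else if x = j then b else 0)
     = cnj a * A i i * a + cnj a * A i j * b + cnj b * A j i * a + cnj b * A j j * b"
proof -
  have "qform I A (\<lambda>x. if x = i then a else if x = j then b else 0)
      = qform {i, j} A (\<lambda>x. if x = i then a else if x = j then b else 0)"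
    by (rule qform_eq_on_support) (use assms in auto)
  also have "\<dots> = cnj a * A i i * a + cnj a * A i j * b + cnj b * A j i * a + cnj b * A j j * b"
    unfolding qform_def using assms(4) by (simp add: algebra_simps)
  finally show ?thesis .
qed

lemma psd_on_diag:
  assumes "finite I" "psd_on I A" "i \<in> I"
  shows "Im (A i i) = 0" "0 \<le> Re (A i i)"
proof -
  have "qform I A (\<lambda>x. if x = i then 1 else 0) = qform {i} A (\<lambda>x. if x = i then 1 else 0)"
    by (rule qform_eq_on_support) (use assms in auto)
  then have "qform I A (\<lambda>x. if x = i then 1 else 0) = A i i" by (simp add: qform_def)
  then show "Im (A i i) = 0" "0 \<le> Re (A i i)" using assms(2) unfolding psd_on_def by metis+
qed

lemma psd_on_hermitian:
  assumes "finite I" "psd_on I A" "i \<in> I" "j \<in> I"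
  shows "A j i = cnj (A i j)"
proof (cases "i = j")
  case True
  then show ?thesis using psd_on_diag[OF assms(1,2,3)] by (simp add: complex_eq_iff)
next
  case False
  have "Im (qform I A (\<lambda>x. if x = i then 1 else if x = j then 1 else 0)) = 0"
    "Im (qform I A (\<lambda>x. if x = i then 1 else if x = j then \<i> else 0)) = 0"
    using assms(2) unfolding psd_on_def by blast+
  moreover have "Im (A i i) = 0" "Im (A j j) = 0" using psd_on_diag(1)[OF assms(1,2)] assms(3,4) by auto
  ultimately show ?thesis
    unfolding qform_two_points[OF assms(1,3,4) False] by (simp add: complex_eq_iff algebra_simps)
qed

lemma psd_on_zero_diag_imp_zero_row:
  assumes "finite I" "psd_on I A" "q \<in> I" "j \<in> I" "A q q = 0"
  shows "A q j = 0"
proof (rule ccontr)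
  assume nz: "A q j \<noteq> 0"
  then have qj: "q \<noteq> j" using assms(5) by auto
  define c where "c = A q j"
  define s where "s = (Re (A j j) + 1) / (2 * (cmod c)^2)"
  have cpos: "0 < (cmod c)^2" using nz c_def by simp
  have h: "A j q = cnj c" using psd_on_hermitian[OF assms(1-4)] c_def by simp
  have "0 \<le> Re (qform I A (\<lambda>x. if x = q then - of_real s * c else if x = j then 1 else 0))"
    using assms(2) unfolding psd_on_def by blast
  also have "\<dots> = - 2 * s * ((Re c)^2 + (Im c)^2) + Re (A j j)"
    unfolding qform_two_points[OF assms(1,3,4) qj] using assms(5) h
    by (simp add: c_def[symmetric] algebra_simps power2_eq_square)
  also have "\<dots> = - 2 * s * (cmod c)^2 + Re (A j j)" by (simp add: cmod_power2)
  also have "\<dots> = -1" using cpos by (simp add: s_def field_simps)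
  finally show False by simp
qed

lemma psd_on_schur_complement:
  assumes "finite I" "psd_on I A" "q \<in> I" "A q q \<noteq> 0"
  shows "psd_on I (\<lambda>i j. A i j - A i q * A q j / A q q)"
  unfolding psd_on_def
proof
  fix v :: "nat \<Rightarrow> complex"
  define J where "J = I - {q}"
  define S where "S i j = A i j - A i q * A q j / A q q" for i j
  define a where "a = A q q"
  define s where "s = (\<Sum>j\<in>J. A q j * v j)"
  have I: "I = insert q J" "finite J" "q \<notin> J" using assms(1,3) by (auto simp: J_def)
  have a_real: "cnj a = a" using psd_on_diag(1)[OF assms(1-3)] by (simp add: a_def complex_eq_iff)
  have col: "(\<Sum>i\<in>J. cnj (v i) * A i q) = cnj s"
    unfolding s_def using psd_on_hermitian[OF assms(1,2,3)] I(1) by (simp add: mult.commute)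
  have "qform I S v = qform J S v"
    unfolding I(1) qform_insert[OF I(2,3)] using assms(4) by (simp add: S_def)
  also have "\<dots> = qform J A v - (\<Sum>i\<in>J. cnj (v i) * A i q) * s / a"
    unfolding qform_def S_def a_def s_def
    by (simp add: sum_subtractf algebra_simps diff_divide_distrib sum_distrib_left sum_distrib_right
        sum_divide_distrib)
  also have "\<dots> = qform I A (v(q := - s / a))"
  proof -
    define w where "w = v(q := - s / a)"
    have "\<And>i. i \<in> J \<Longrightarrow> w i = v i" using I(3) by (auto simp: w_def)
    then have "qform J A w = qform J A v" "(\<Sum>j\<in>J. A q j * w j) = s" "(\<Sum>i\<in>J. cnj (w i) * A i q) = (\<Sum>i\<in>J. cnj (v i) * A i q)"
      by (auto simp: s_def intro: qform_cong sum.cong)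
    then show ?thesis
      unfolding w_def[symmetric] I(1) qform_insert[OF I(2,3)] col using assms(4) a_real
      by (simp add: w_def a_def[symmetric] field_simps)
  qed
  finally show "Im (qform I S v) = 0 \<and> 0 \<le> Re (qform I S v)"
    using assms(2) unfolding psd_on_def by simp
qed

lemma psd_on_column_in_range:
  assumes "finite J" "p \<notin> J" "psd_on (insert p J) A"
  shows "\<exists>x. \<forall>i\<in>J. (\<Sum>j\<in>J. A i j * x j) = A i p"
  using assms
proof (induction J arbitrary: A rule: finite_induct)
  case empty
  then show ?case by simp
next
  case (insert q J)
  have fin: "finite (insert p (insert q J))" and pJ: "p \<notin> J" using insert by auto
  show ?case
  proof (cases "A q q = 0")
    case True
    have row: "\<And>j. j \<in> insert p (insert q J) \<Longrightarrow> A q j = 0"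
      using psd_on_zero_diag_imp_zero_row[OF fin insert.prems(2) _ _ True] by simp
    have "psd_on (insert p J) A" by (rule psd_on_subset[OF fin _ insert.prems(2)]) auto
    then obtain x where x: "\<forall>i\<in>J. (\<Sum>j\<in>J. A i j * x j) = A i p"
      using insert.IH[OF pJ] by blast
    have "\<And>i. (\<Sum>j\<in>insert q J. A i j * (x(q := 0)) j) = (\<Sum>j\<in>J. A i j * x j)"
      using insert(1,2) by (simp, intro sum.cong) auto
    then show ?thesis using x row by (intro exI[of _ "x(q := 0)"]) auto
  next
    case False
    define S where "S i j = A i j - A i q * A q j / A q q" for i j
    have "psd_on (insert p (insert q J)) S"
      unfolding S_def by (rule psd_on_schur_complement[OF fin insert.prems(2) _ \<open>A q q \<noteq> 0\<close>]) simp
    then have "psd_on (insert p J) S" by (rule psd_on_subset[OF fin, rotated]) auto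
    then obtain x where x: "\<forall>i\<in>J. (\<Sum>j\<in>J. S i j * x j) = S i p"
      using insert.IH[OF pJ] by blast
    define y where "y = x(q := (A q p - (\<Sum>j\<in>J. A q j * x j)) / A q q)"
    have y_sum: "\<And>i. (\<Sum>j\<in>insert q J. A i j * y j) = A i q * y q + (\<Sum>j\<in>J. A i j * x j)"
      using insert(1,2) by (simp add: y_def, intro sum.cong) auto
    have "(\<Sum>j\<in>insert q J. A i j * y j) = A i p" if i: "i \<in> insert q J" for i
    proof (cases "i = q")
      case True
      then show ?thesis unfolding y_sum using \<open>A q q \<noteq> 0\<close> by (simp add: y_def field_simps)
    next
      case False
      then have "i \<in> J" using i by simp
      have "(\<Sum>j\<in>J. A i j * x j) = (\<Sum>j\<in>J. S i j * x j) + A i q / A q q * (\<Sum>j\<in>J. A q j * x j)"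
        unfolding S_def by (simp add: sum_distrib_left sum.distrib[symmetric] algebra_simps)
      also have "(\<Sum>j\<in>J. S i j * x j) = S i p" using x \<open>i \<in> J\<close> by simp
      finally show ?thesis unfolding y_sum using \<open>A q q \<noteq> 0\<close> by (simp add: S_def y_def field_simps)
    qed
    then show ?thesis by blast
  qed
qed

lemma qform_insert_column_solution:
  assumes "finite J" "p \<notin> J" "psd_on (insert p J) A"
    and x: "\<And>i. i \<in> J \<Longrightarrow> (\<Sum>j\<in>J. A i j * x j) = A i p"
  shows "qform (insert p J) A (x(p := -1)) = A p p - qform J A x"
proof -
  have fin: "finite (insert p J)" using assms(1) by simp
  define Q where "Q = qform J A x"
  have col: "(\<Sum>i\<in>J. cnj (x i) * A i p) = Q"
    unfolding Q_def qform_def by (intro sum.cong refl) (simp add: x[symmetric] sum_distrib_left mult.assoc)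
  have "Im Q = 0"
    using psd_on_subset[OF fin _ assms(3)] unfolding Q_def psd_on_def by blast
  moreover have "(\<Sum>j\<in>J. A p j * x j) = cnj (\<Sum>i\<in>J. cnj (x i) * A i p)"
    unfolding cnj_sum complex_cnj_mult complex_cnj_cnj
    by (intro sum.cong refl) (simp add: psd_on_hermitian[OF fin assms(3), of _ p] mult.commute)
  ultimately have row: "(\<Sum>j\<in>J. A p j * x j) = Q"
    using col by (simp add: complex_eq_iff)
  have xp: "\<And>i. i \<in> J \<Longrightarrow> (x(p := -1)) i = x i" using assms(2) by auto
  have "qform J A (x(p := -1)) = Q" unfolding Q_def by (rule qform_cong) (use xp in auto)
  moreover have "(\<Sum>j\<in>J. A p j * (x(p := -1)) j) = Q"
    unfolding row[symmetric] by (rule sum.cong) (use xp in auto)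
  moreover have "(\<Sum>i\<in>J. cnj ((x(p := -1)) i) * A i p) = Q"
    unfolding col[symmetric] by (rule sum.cong) (use xp in auto)
  ultimately show ?thesis unfolding qform_insert[OF assms(1,2)] Q_def by simp
qed

lemma psd_iff_psd_on: "psd n P \<longleftrightarrow> P \<in> carrier_mat n n \<and> psd_on {..<n} (\<lambda>i j. P $$ (i, j))"
proof -
  let ?A = "\<lambda>i j. P $$ (i, j)"
  have vec_form: "(\<Sum>i<n. \<Sum>j<n. cnj (w $ i) * P $$ (i, j) * w $ j) = qform {..<n} ?A (($) w)" for w
    by (simp add: qform_def)
  have "qform {..<n} ?A v = qform {..<n} ?A (($) (vec n v))" for v by (rule qform_cong) auto
  then have "(\<forall>w\<in>carrier_vec n. Im (qform {..<n} ?A (($) w)) = 0 \<and> 0 \<le> Re (qform {..<n} ?A (($) w)))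
      \<longleftrightarrow> psd_on {..<n} ?A"
    unfolding psd_on_def by (metis vec_carrier)
  then show ?thesis unfolding psd_def Let_def vec_form by blast
qed

section \<open>Gram decompositions\<close>

definition gram_on :: "nat set \<Rightarrow> (nat \<Rightarrow> nat \<Rightarrow> complex) \<Rightarrow> (nat \<Rightarrow> complex) list \<Rightarrow> bool" where
  "gram_on J A us \<longleftrightarrow> (\<forall>i\<in>J. \<forall>j\<in>J. A i j = (\<Sum>u\<leftarrow>us. u i * cnj (u j)))"

lemma gram_on_append:
  "gram_on J A us \<Longrightarrow> gram_on J B vs \<Longrightarrow> gram_on J (\<lambda>i j. A i j + B i j) (us @ vs)"
  unfolding gram_on_def by simp

lemma qform_gram:
  assumes "gram_on J A us"
  shows "qform J A x = (\<Sum>u\<leftarrow>us. cnj (\<Sum>j\<in>J. cnj (u j) * x j) * (\<Sum>j\<in>J. cnj (u j) * x j))"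
proof -
  have "qform J A x = (\<Sum>i\<in>J. \<Sum>j\<in>J. \<Sum>u\<leftarrow>us. cnj (x i) * u i * (cnj (u j) * x j))"
    using assms unfolding qform_def gram_on_def
    by (intro sum.cong refl) (simp add: sum_list_const_mult[symmetric] sum_list_mult_const[symmetric]
        mult.assoc)
  also have "\<dots> = (\<Sum>u\<leftarrow>us. \<Sum>i\<in>J. \<Sum>j\<in>J. cnj (x i) * u i * (cnj (u j) * x j))"
    by (simp add: sum_list_sum_swap)
  also have "\<dots> = (\<Sum>u\<leftarrow>us. (\<Sum>i\<in>J. cnj (x i) * u i) * (\<Sum>j\<in>J. cnj (u j) * x j))"
    by (simp add: sum_product)
  finally show ?thesis by (simp add: mult.commute)
qed

lemma gram_on_column:
  assumes "finite J" "p \<notin> J" "psd_on (insert p J) A" "gram_on J A us"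
  obtains c :: "(nat \<Rightarrow> complex) \<Rightarrow> complex" and r :: real
  where "\<And>i. i \<in> J \<Longrightarrow> (\<Sum>u\<leftarrow>us. u i * c u) = A i p"
    and "A p p = (\<Sum>u\<leftarrow>us. cnj (c u) * c u) + of_real r" and "0 \<le> r"
proof -
  obtain x where x: "\<And>i. i \<in> J \<Longrightarrow> (\<Sum>j\<in>J. A i j * x j) = A i p"
    using psd_on_column_in_range[OF assms(1-3)] by blast
  define c where "c u = (\<Sum>j\<in>J. cnj (u j) * x j)" for u :: "nat \<Rightarrow> complex"
  have col: "(\<Sum>u\<leftarrow>us. u i * c u) = A i p" if i: "i \<in> J" for i
  proof -
    have "(\<Sum>u\<leftarrow>us. u i * c u) = (\<Sum>j\<in>J. \<Sum>u\<leftarrow>us. u i * cnj (u j) * x j)"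
      unfolding c_def by (simp add: sum_distrib_left mult.assoc sum_list_sum_swap)
    also have "\<dots> = (\<Sum>j\<in>J. A i j * x j)"
      using assms(4) i unfolding gram_on_def by (intro sum.cong refl) (simp add: sum_list_mult_const)
    finally show ?thesis using x[OF i] by simp
  qed
  \<comment> \<open>The remainder at p is the Schur complement of J: the value of the form at (x, -1).\<close>
  have "qform (insert p J) A (x(p := -1)) = A p p - (\<Sum>u\<leftarrow>us. cnj (c u) * c u)"
    using qform_insert_column_solution[OF assms(1-3) x] qform_gram[OF assms(4), of x] by (simp add: c_def)
  then have "Im (A p p - (\<Sum>u\<leftarrow>us. cnj (c u) * c u)) = 0" "0 \<le> Re (A p p - (\<Sum>u\<leftarrow>us. cnj (c u) * c u))"
    using assms(3) unfolding psd_on_def by metis+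
  then show ?thesis
    using col by (intro that[of c "Re (A p p - (\<Sum>u\<leftarrow>us. cnj (c u) * c u))"]) (auto simp: complex_eq_iff)
qed

lemma gram_on_insert:
  assumes "finite J" "p \<notin> J" "psd_on (insert p J) A" "gram_on J A us"
  shows "\<exists>vs. gram_on (insert p J) A vs \<and>
    (\<forall>v\<in>set vs. (\<exists>u\<in>set us. \<forall>j\<in>J. v j = u j) \<or> (\<forall>j\<in>J. v j = 0))"
proof -
  obtain c r where col: "\<And>i. i \<in> J \<Longrightarrow> (\<Sum>u\<leftarrow>us. u i * c u) = A i p"
    and diag: "A p p = (\<Sum>u\<leftarrow>us. cnj (c u) * c u) + of_real r" and "0 \<le> r"
    using gram_on_column[OF assms] by blast
  have row: "(\<Sum>u\<leftarrow>us. cnj (c u) * cnj (u j)) = A p j" if j: "j \<in> J" for j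
  proof -
    have "(\<Sum>u\<leftarrow>us. cnj (c u) * cnj (u j)) = cnj (\<Sum>u\<leftarrow>us. u j * c u)"
      by (simp add: cnj_sum_list mult.commute)
    then show ?thesis using col[OF j] psd_on_hermitian[OF _ assms(3), of j p] assms(1) j by simp
  qed
  define vs where "vs = map (\<lambda>u. u(p := cnj (c u))) us @ [(\<lambda>i. if i = p then of_real (sqrt r) else 0)]"
  have "A i j = (\<Sum>v\<leftarrow>vs. v i * cnj (v j))" if ij: "i \<in> insert p J" "j \<in> insert p J" for i j
  proof -
    consider "i \<in> J" "j \<in> J" | "i \<in> J" "j = p" | "i = p" "j \<in> J" | "i = p" "j = p"
      using ij by blast
    then show ?thesis
    proof cases
      case 1
      then show ?thesis using assms(2,4) unfolding gram_on_def by (auto simp: vs_def o_def)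
    next
      case 2
      then show ?thesis using assms(2) col by (auto simp: vs_def o_def)
    next
      case 3
      then show ?thesis using assms(2) row by (auto simp: vs_def o_def)
    next
      case 4
      then show ?thesis using diag \<open>0 \<le> r\<close> by (auto simp: vs_def o_def simp flip: of_real_mult)
    qed
  qed
  moreover have "\<forall>v\<in>set vs. (\<exists>u\<in>set us. \<forall>j\<in>J. v j = u j) \<or> (\<forall>j\<in>J. v j = 0)"
    using assms(2) by (auto simp: vs_def)
  ultimately show ?thesis unfolding gram_on_def by blast
qed

lemma gram_on_extend:
  assumes "finite J" "finite K" "psd_on (J \<union> K) A" "gram_on J A us"
  shows "\<exists>vs. gram_on (J \<union> K) A vs \<and>
    (\<forall>v\<in>set vs. (\<exists>u\<in>set us. \<forall>j\<in>J. v j = u j) \<or> (\<forall>j\<in>J. v j = 0))"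
  using assms(2,3)
proof (induction K rule: finite_induct)
  case empty
  then show ?case using assms(4) by auto
next
  case (insert p K)
  have "psd_on (J \<union> K) A" by (rule psd_on_subset[OF _ _ insert.prems]) (use assms(1) insert(1) in auto)
  then obtain vs where vs: "gram_on (J \<union> K) A vs"
    "\<forall>v\<in>set vs. (\<exists>u\<in>set us. \<forall>j\<in>J. v j = u j) \<or> (\<forall>j\<in>J. v j = 0)"
    using insert.IH by blast
  show ?case
  proof (cases "p \<in> J \<union> K")
    case True
    then have "J \<union> insert p K = J \<union> K" by blast
    then show ?thesis using vs by auto
  next
    case False
    have "psd_on (insert p (J \<union> K)) A" using insert.prems by simp
    then obtain ws where ws: "gram_on (insert p (J \<union> K)) A ws"
      "\<forall>w\<in>set ws. (\<exists>v\<in>set vs. \<forall>j\<in>J \<union> K. w j = v j) \<or> (\<forall>j\<in>J \<union> K. w j = 0)"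
      using gram_on_insert[OF _ False _ vs(1)] assms(1) insert(1) by blast
    have "\<forall>w\<in>set ws. (\<exists>u\<in>set us. \<forall>j\<in>J. w j = u j) \<or> (\<forall>j\<in>J. w j = 0)"
      using ws(2) vs(2) by (metis UnI1)
    then show ?thesis using ws(1) by auto
  qed
qed

lemma psd_on_imp_gram:
  assumes "finite I" "psd_on I A"
  shows "\<exists>us. gram_on I A us"
  using gram_on_extend[of "{}" I A "[]"] assms by (auto simp: gram_on_def)

lemma gram_on_kron:
  assumes "gram_on {..<n} P as" "gram_on {..<b} Q bs"
  shows "gram_on {..<n * b} (\<lambda>i j. P (i div b) (j div b) * Q (i mod b) (j mod b))
    [\<lambda>i. \<alpha> (i div b) * \<beta> (i mod b). \<alpha> \<leftarrow> as, \<beta> \<leftarrow> bs]"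
  unfolding gram_on_def
proof (intro ballI)
  fix i j assume ij: "i \<in> {..<n * b}" "j \<in> {..<n * b}"
  then have "0 < b" by (cases b) auto
  with ij have "i div b < n" "j div b < n" "i mod b < b" "j mod b < b"
    by (auto simp: less_mult_imp_div_less mult.commute)
  then have "P (i div b) (j div b) * Q (i mod b) (j mod b)
      = (\<Sum>\<alpha>\<leftarrow>as. \<alpha> (i div b) * cnj (\<alpha> (j div b))) * (\<Sum>\<beta>\<leftarrow>bs. \<beta> (i mod b) * cnj (\<beta> (j mod b)))"
    using assms unfolding gram_on_def by simp
  also have "\<dots> = (\<Sum>\<alpha>\<leftarrow>as. \<alpha> (i div b) * cnj (\<alpha> (j div b)) * (\<Sum>\<beta>\<leftarrow>bs. \<beta> (i mod b) * cnj (\<beta> (j mod b))))"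
    by (rule sum_list_mult_const[symmetric])
  also have "\<dots> = (\<Sum>\<alpha>\<leftarrow>as. \<Sum>\<beta>\<leftarrow>bs. \<alpha> (i div b) * \<beta> (i mod b) * cnj (\<alpha> (j div b) * \<beta> (j mod b)))"
    by (intro arg_cong[where f = sum_list] map_cong refl)
      (simp add: sum_list_const_mult[symmetric] algebra_simps)
  finally show "P (i div b) (j div b) * Q (i mod b) (j mod b)
      = (\<Sum>u\<leftarrow>[\<lambda>i. \<alpha> (i div b) * \<beta> (i mod b). \<alpha> \<leftarrow> as, \<beta> \<leftarrow> bs]. u i * cnj (u j))"
    by (simp only: sum_list_concat_map)
qed

section \<open>Separable matrices and Schmidt rank\<close>

lemma block_index_less:
  fixes i p a b :: nat
  assumes "i < a" "p < b"
  shows "i * b + p < a * b"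
proof -
  have "Suc i * b \<le> a * b" using assms(1) by (intro mult_le_mono1) simp
  then show ?thesis using assms(2) by simp
qed

lemma foldr_kron_eq_mat:
  assumes "\<forall>(P, Q)\<in>set ps. P \<in> carrier_mat n n \<and> Q \<in> carrier_mat b b"
  shows "foldr (\<lambda>(P, Q) acc. kron P Q + acc) ps (0\<^sub>m (n * b) (n * b))
     = mat (n * b) (n * b) (\<lambda>(i, j). \<Sum>(P, Q)\<leftarrow>ps. P $$ (i div b, j div b) * Q $$ (i mod b, j mod b))"
  using assms
proof (induction ps)
  case Nil
  then show ?case by (auto intro!: eq_matI)
next
  case (Cons PQ ps)
  obtain P Q where PQ: "PQ = (P, Q)" by fastforce
  have "P \<in> carrier_mat n n" "Q \<in> carrier_mat b b" using Cons.prems PQ by auto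
  then show ?case using Cons unfolding PQ by (intro eq_matI) (auto simp: kron_def)
qed

definition product_on :: "nat \<Rightarrow> nat \<Rightarrow> (nat \<Rightarrow> complex) \<Rightarrow> bool" where
  "product_on n b u \<longleftrightarrow> (\<exists>\<alpha> \<beta>. \<forall>i<n. \<forall>p<b. u (i * b + p) = \<alpha> i * \<beta> p)"

lemma product_on_cong:
  assumes "product_on n b u" "\<And>j. j < n * b \<Longrightarrow> v j = u j"
  shows "product_on n b v"
proof -
  obtain \<alpha> \<beta> where "\<forall>i<n. \<forall>p<b. u (i * b + p) = \<alpha> i * \<beta> p"
    using assms(1) unfolding product_on_def by blast
  then have "\<forall>i<n. \<forall>p<b. v (i * b + p) = \<alpha> i * \<beta> p" using assms(2) block_index_less by simp
  then show ?thesis unfolding product_on_def by blast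
qed

lemma separable_imp_gram_product_on:
  assumes "separable n b Y"
  shows "\<exists>us. gram_on {..<n * b} (\<lambda>i j. Y $$ (i, j)) us \<and> (\<forall>u\<in>set us. product_on n b u)"
proof -
  obtain ps where ps: "\<forall>(P, Q)\<in>set ps. psd n P \<and> psd b Q"
    "Y = foldr (\<lambda>(P, Q) acc. kron P Q + acc) ps (0\<^sub>m (n * b) (n * b))"
    using assms unfolding separable_def by blast
  have car: "\<forall>(P, Q)\<in>set ps. P \<in> carrier_mat n n \<and> Q \<in> carrier_mat b b"
    using ps(1) unfolding psd_def by auto
  have "\<exists>us. gram_on {..<n * b}
      (\<lambda>i j. \<Sum>(P, Q)\<leftarrow>ps. P $$ (i div b, j div b) * Q $$ (i mod b, j mod b)) us \<and>
      (\<forall>u\<in>set us. product_on n b u)"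
    using ps(1)
  proof (induction ps)
    case Nil
    show ?case by (intro exI[of _ "[]"]) (simp add: gram_on_def)
  next
    case (Cons PQ ps)
    obtain P Q where PQ: "PQ = (P, Q)" by fastforce
    then have "psd n P" "psd b Q" using Cons.prems by auto
    then obtain as bs where "gram_on {..<n} (\<lambda>i j. P $$ (i, j)) as" "gram_on {..<b} (\<lambda>i j. Q $$ (i, j)) bs"
      using psd_on_imp_gram unfolding psd_iff_psd_on by (meson finite_lessThan)
    from gram_on_kron[OF this] obtain us where
      "gram_on {..<n * b} (\<lambda>i j. P $$ (i div b, j div b) * Q $$ (i mod b, j mod b)) us"
      "\<forall>u\<in>set us. product_on n b u"
      unfolding product_on_def by fastforce
    moreover obtain vs where
      "gram_on {..<n * b} (\<lambda>i j. \<Sum>(P, Q)\<leftarrow>ps. P $$ (i div b, j div b) * Q $$ (i mod b, j mod b)) vs"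
      "\<forall>v\<in>set vs. product_on n b v"
      using Cons by auto
    ultimately show ?case unfolding PQ using gram_on_append by fastforce
  qed
  then show ?thesis unfolding ps(2) foldr_kron_eq_mat[OF car] by (simp add: gram_on_def)
qed

lemma rank_sum_outer_le_card:
  assumes "finite S"
  shows "vec_space.rank b (mat b b (\<lambda>(p, q). \<Sum>i\<in>S. f i p * cnj (f i q))) \<le> card S"
  using assms
proof (induction S rule: finite_induct)
  case empty
  have zero: "mat b b (\<lambda>(p, q). \<Sum>i\<in>{}. f i p * cnj (f i q)) = 0\<^sub>m b b" by (rule eq_matI) auto
  show ?case unfolding zero by (simp add: vec_space.rank_0I)
next
  case (insert i S)
  have split: "mat b b (\<lambda>(p, q). \<Sum>i'\<in>insert i S. f i' p * cnj (f i' q))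
     = mat b b (\<lambda>(p, q). f i p * cnj (f i q)) + mat b b (\<lambda>(p, q). \<Sum>i'\<in>S. f i' p * cnj (f i' q))"
    by (rule eq_matI) (use insert in auto)
  have "vec_space.rank b (mat b b (\<lambda>(p, q). f i p * cnj (f i q))) \<le> 1"
    by (rule vec_space.rank_le_1_product_entries[where f = "f i" and g = "\<lambda>q. cnj (f i q)"]) auto
  moreover have "vec_space.rank b (mat b b (\<lambda>(p, q). \<Sum>i'\<in>insert i S. f i' p * cnj (f i' q)))
     \<le> vec_space.rank b (mat b b (\<lambda>(p, q). f i p * cnj (f i q)))
       + vec_space.rank b (mat b b (\<lambda>(p, q). \<Sum>i'\<in>S. f i' p * cnj (f i' q)))"
    unfolding split by (rule vec_space.rank_subadditive) auto
  ultimately show ?case using insert by simp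
qed

lemma ptrace_A_outer_vec:
  "ptrace_A a b (outer (vec (a * b) u)) = mat b b (\<lambda>(p, q). \<Sum>i<a. u (i * b + p) * cnj (u (i * b + q)))"
  unfolding ptrace_A_def outer_def by (rule eq_matI) (auto intro!: sum.cong simp: block_index_less)

lemma schmidt_rank_le_dim: "schmidt_rank a b (vec (a * b) u) \<le> a"
  unfolding schmidt_rank_def ptrace_A_outer_vec
  using rank_sum_outer_le_card[where S = "{..<a}" and f = "\<lambda>i p. u (i * b + p)"] by simp

lemma schmidt_rank_le_of_product_on:
  assumes "n \<le> a" "product_on n b u"
  shows "schmidt_rank a b (vec (a * b) u) \<le> 1 + (a - n)"
proof -
  obtain \<alpha> \<beta> where prod: "\<And>i p. i < n \<Longrightarrow> p < b \<Longrightarrow> u (i * b + p) = \<alpha> i * \<beta> p"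
    using assms(2) unfolding product_on_def by blast
  define c where "c = (\<Sum>i<n. \<alpha> i * cnj (\<alpha> i))"
  define T where "T = mat b b (\<lambda>(p, q). \<Sum>i\<in>{n..<a}. u (i * b + p) * cnj (u (i * b + q)))"
  have entry: "(\<Sum>i<a. u (i * b + p) * cnj (u (i * b + q)))
      = c * \<beta> p * cnj (\<beta> q) + (\<Sum>i\<in>{n..<a}. u (i * b + p) * cnj (u (i * b + q)))"
    if "p < b" "q < b" for p q
  proof -
    have "(\<Sum>i<a. u (i * b + p) * cnj (u (i * b + q)))
        = (\<Sum>i\<in>{..<n} \<union> {n..<a}. u (i * b + p) * cnj (u (i * b + q)))"
      using assms(1) by (intro sum.cong) auto
    also have "\<dots> = (\<Sum>i<n. u (i * b + p) * cnj (u (i * b + q)))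
        + (\<Sum>i\<in>{n..<a}. u (i * b + p) * cnj (u (i * b + q)))"
      by (rule sum.union_disjoint) auto
    finally have "(\<Sum>i<a. u (i * b + p) * cnj (u (i * b + q)))
        = (\<Sum>i<n. u (i * b + p) * cnj (u (i * b + q))) + (\<Sum>i\<in>{n..<a}. u (i * b + p) * cnj (u (i * b + q)))" .
    moreover have "(\<Sum>i<n. u (i * b + p) * cnj (u (i * b + q))) = c * \<beta> p * cnj (\<beta> q)"
      unfolding c_def sum_distrib_right using that by (intro sum.cong) (auto simp: prod)
    ultimately show ?thesis by simp
  qed
  have "ptrace_A a b (outer (vec (a * b) u)) = mat b b (\<lambda>(p, q). c * \<beta> p * cnj (\<beta> q)) + T"
    unfolding ptrace_A_outer_vec T_def by (rule eq_matI) (auto simp: entry)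
  then have "schmidt_rank a b (vec (a * b) u)
      \<le> vec_space.rank b (mat b b (\<lambda>(p, q). c * \<beta> p * cnj (\<beta> q))) + vec_space.rank b T"
    unfolding schmidt_rank_def by (simp only:) (rule vec_space.rank_subadditive, auto simp: T_def)
  moreover have "vec_space.rank b (mat b b (\<lambda>(p, q). c * \<beta> p * cnj (\<beta> q))) \<le> 1"
    by (rule vec_space.rank_le_1_product_entries[where f = "\<lambda>p. c * \<beta> p" and g = "\<lambda>q. cnj (\<beta> q)"]) auto
  moreover have "vec_space.rank b T \<le> a - n"
    using rank_sum_outer_le_card[where S = "{n..<a}" and f = "\<lambda>i p. u (i * b + p)"] by (simp add: T_def)
  ultimately show ?thesis by simp
qed

lemma foldr_outer_eq_mat:
  "foldr (\<lambda>(p, v) acc. complex_of_real p \<cdot>\<^sub>m outer v + acc) (map (\<lambda>u. (1, vec N u)) us) (0\<^sub>m N N)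
   = mat N N (\<lambda>(i, j). \<Sum>u\<leftarrow>us. u i * cnj (u j))"
  by (induction us) (auto intro!: eq_matI simp: outer_def)

lemma schmidt_number_le_of_gram:
  assumes "X \<in> carrier_mat (a * b) (a * b)" "gram_on {..<a * b} (\<lambda>i j. X $$ (i, j)) us"
    "\<And>u. u \<in> set us \<Longrightarrow> schmidt_rank a b (vec (a * b) u) \<le> r"
  shows "schmidt_number a b X \<le> r"
  unfolding schmidt_number_def
proof (rule Least_le)
  have "X = mat (a * b) (a * b) (\<lambda>(i, j). \<Sum>u\<leftarrow>us. u i * cnj (u j))"
    using assms(1,2) unfolding gram_on_def by (intro eq_matI) auto
  then show "\<exists>ds :: (real \<times> complex vec) list.
      (\<forall>(p, v) \<in> set ds. p > 0 \<and> v \<in> carrier_vec (a * b) \<and> schmidt_rank a b v \<le> r) \<and>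
      X = foldr (\<lambda>(p, v) acc. complex_of_real p \<cdot>\<^sub>m outer v + acc) ds (0\<^sub>m (a * b) (a * b))"
    using assms(3) by (intro exI[of _ "map (\<lambda>u. (1, vec (a * b) u)) us"]) (auto simp: foldr_outer_eq_mat)
qed

lemma schmidt_number_le_dim:
  assumes "psd (a * b) X"
  shows "schmidt_number a b X \<le> a"
proof -
  obtain us where "gram_on {..<a * b} (\<lambda>i j. X $$ (i, j)) us"
    using assms psd_on_imp_gram unfolding psd_iff_psd_on by blast
  moreover have "X \<in> carrier_mat (a * b) (a * b)" using assms unfolding psd_iff_psd_on by simp
  ultimately show ?thesis using schmidt_number_le_of_gram schmidt_rank_le_dim by blast
qed

lemma principal_subblock_id_nth:
  "i < n * b \<Longrightarrow> j < n * b \<Longrightarrow> principal_subblock n b id X $$ (i, j) = X $$ (i, j)"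
  unfolding principal_subblock_def by simp

lemma psd_principal_subblock_id:
  assumes "psd (a * b) X" "n \<le> a"
  shows "psd (n * b) (principal_subblock n b id X)"
proof -
  have "psd_on {..<n * b} (\<lambda>i j. X $$ (i, j))"
    using assms psd_on_subset[of "{..<a * b}"] unfolding psd_iff_psd_on by (simp add: mult_le_mono1)
  moreover have "psd_on {..<n * b} (\<lambda>i j. principal_subblock n b id X $$ (i, j))
      \<longleftrightarrow> psd_on {..<n * b} (\<lambda>i j. X $$ (i, j))"
    by (rule psd_on_cong) (simp add: principal_subblock_id_nth)
  ultimately show ?thesis unfolding psd_iff_psd_on by (simp add: principal_subblock_def)
qed

lemma schmidt_number_le_of_separable_subblock:
  assumes "psd (a * b) X" "n \<le> a" "separable n b (principal_subblock n b id X)"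
  shows "schmidt_number a b X \<le> 1 + (a - n)"
proof -
  have X: "X \<in> carrier_mat (a * b) (a * b)" "psd_on {..<a * b} (\<lambda>i j. X $$ (i, j))"
    using assms(1) unfolding psd_iff_psd_on by auto
  obtain us where us_Y: "gram_on {..<n * b} (\<lambda>i j. principal_subblock n b id X $$ (i, j)) us"
    and us: "\<forall>u\<in>set us. product_on n b u"
    using separable_imp_gram_product_on[OF assms(3)] by blast
  have us_X: "gram_on {..<n * b} (\<lambda>i j. X $$ (i, j)) us"
    using us_Y unfolding gram_on_def by (simp add: principal_subblock_id_nth)
  have "{..<n * b} \<union> {n * b..<a * b} = {..<a * b}"
    using mult_le_mono1[OF assms(2)] by (rule ivl_disj_un_one(2))
  then have "psd_on ({..<n * b} \<union> {n * b..<a * b}) (\<lambda>i j. X $$ (i, j))" using X(2) by simp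
  from gram_on_extend[OF finite_lessThan finite_atLeastLessThan this us_X] \<open>_ = {..<a * b}\<close>
  obtain vs where vs: "gram_on {..<a * b} (\<lambda>i j. X $$ (i, j)) vs"
    "\<forall>v\<in>set vs. (\<exists>u\<in>set us. \<forall>j\<in>{..<n * b}. v j = u j) \<or> (\<forall>j\<in>{..<n * b}. v j = 0)"
    by (elim exE conjE) simp
  have "product_on n b v" if "v \<in> set vs" for v
  proof -
    have "(\<exists>u\<in>set us. \<forall>j\<in>{..<n * b}. v j = u j) \<or> (\<forall>j\<in>{..<n * b}. v j = 0)"
      using vs(2) that by (rule bspec)
    then show ?thesis
    proof
      assume "\<exists>u\<in>set us. \<forall>j\<in>{..<n * b}. v j = u j"
      then obtain u where "u \<in> set us" "\<And>j. j < n * b \<Longrightarrow> v j = u j" by blast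
      then show ?thesis using us product_on_cong by blast
    next
      assume "\<forall>j\<in>{..<n * b}. v j = 0"
      then have "\<And>j. j < n * b \<Longrightarrow> v j = 0" by simp
      moreover have "product_on n b (\<lambda>_. 0)" unfolding product_on_def by (intro exI[of _ "\<lambda>_. 0"]) simp
      ultimately show ?thesis using product_on_cong by blast
    qed
  qed
  then have "\<And>v. v \<in> set vs \<Longrightarrow> schmidt_rank a b (vec (a * b) v) \<le> 1 + (a - n)"
    using schmidt_rank_le_of_product_on[OF assms(2)] by blast
  then show ?thesis by (rule schmidt_number_le_of_gram[OF X(1) vs(1)])
qed

theorem theorem18:
  fixes d1 d2 k :: nat and X :: "complex mat"
  assumes "d1 \<le> d2"
    and "psd (d1 * d2) X"
    and "X \<noteq> 0\<^sub>m (d1 * d2) (d1 * d2)"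
    and "schmidt_number d1 d2 X = k"
    and "k \<ge> 2"
  shows "\<exists>m :: nat \<Rightarrow> nat. inj_on m {..<d1 - k + 2} \<and> m ` {..<d1 - k + 2} \<subseteq> {..<d1} \<and>
           entangled (d1 - k + 2) d2 (principal_subblock (d1 - k + 2) d2 m X)"
proof -
  define n where "n = d1 - k + 2"
  have "k \<le> d1" using schmidt_number_le_dim[OF assms(2)] assms(4) by simp
  then have n: "n \<le> d1" "1 + (d1 - n) < k" using assms(5) by (auto simp: n_def)
  then have "\<not> separable n d2 (principal_subblock n d2 id X)"
    using schmidt_number_le_of_separable_subblock[OF assms(2) n(1)] assms(4) by linarith
  then have "entangled n d2 (principal_subblock n d2 id X)"
    unfolding entangled_def using psd_principal_subblock_id[OF assms(2) n(1)] by blast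
  then show ?thesis using n(1) unfolding n_def by (intro exI[of _ id]) auto
qed

end
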